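(* $\mathcal{L}_{\mathsf{SAFA_{init}}}$ and $\mathcal{L}_{\mathsf{KRFA}}$ are incomparable: there is a data language accepted by some SAFA with initialization but by no $k$-register automaton (for any $k$), and there is a data language accepted by some $k$-register automaton but by no SAFA with initialization.
   Context: $D$ is a fixed countably infinite set of data values; for a finite alphabet $\Sigma$, data languages are subsets of $(\Sigma\times D)^*$. A set augmented finite automaton (SAFA) is a tuple $M=(Q,\Sigma\times D,q_0,F,H,\delta)$: $Q$ finite set of states, $q_0\in Q$ initial, $F\subseteq Q$ final, $H=\{h_1,\dots,h_m\}$ a finite collection of (names of) sets of data values, $\delta\subseteq Q\times\Sigma\times C\times OP\times Q$ with $C=\{p(h_i),\,!p(h_i)\}$, $OP=\{-\}\cup\{\mathsf{ins}(h_i)\}$. Configurations are $(q,\langle S_1,\dots,S_m\rangle)$, $S_i\subseteq D$ finite. On reading $(a,d)$, a transition $(q,a,\alpha,op,q')$ from the current state may be taken if $\alpha=p(h_i)$ and $d\in S_i$, or $\alpha=\,!p(h_i)$ and $d\notin S_i$; then the state becomes $q'$ and if $op=\mathsf{ins}(h_j)$, $d$ is added to $S_j$. A word is accepted if some run reads it entirely and ends in $F$. In an ordinary SAFA all sets start empty; a SAFA with initialization additionally specifies initial contents (finite subsets of $D$) of the sets in $H$ before the computation starts. $\mathcal{L}_{\mathsf{SAFA_{init}}}$ is the class of data languages accepted by nondeterministic SAFA with initialization. A $k$-register automaton is a tuple $(Q,\Sigma,\delta,\tau_0,U,q_0,F)$ with finite state set $Q$, initial state $q_0$, final states $F$, initial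 register assignment $\tau_0:\{1,\dots,k\}\to D\cup\{\bot\}$ (non-$\bot$ values pairwise distinct), partial update function $U:Q\times\Sigma\to\{1,\dots,k\}$, and $\delta\subseteq Q\times\Sigma\times\{1,\dots,k\}\times Q$. Reading $(a,d)$ in state $q$: if $d$ equals the content of register $i$, a transition $(q,a,i,q')\in\delta$ is taken (halt if none); otherwise, if $U(q,a)$ is defined, $d$ is written into register $U(q,a)$ and a transition $(q,a,U(q,a),q')\in\delta$ is taken (halt if none or if $U(q,a)$ undefined). A word is accepted if entirely consumed ending in $F$. $\mathcal{L}_{\mathsf{KRFA}}$ is the class of languages accepted by $k$-register automata for some $k\ge 1$. *)

theory Defs
  imports Main "HOL-Library.Countable_Set"
begin

text \<open>Sets of a SAFA are indexed by 0..m-1; registers of a register automaton by 1..k.\<close>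

datatype cond = Mem nat | NotMem nat
datatype setop = NoOp | Ins nat

record ('s, 'd) safa =
  sQ :: "nat set"
  sq0 :: nat
  sF :: "nat set"
  sm :: nat
  sdelta :: "(nat \<times> 's \<times> cond \<times> setop \<times> nat) set"
  sinit :: "nat \<Rightarrow> 'd set"

fun cond_idx :: "cond \<Rightarrow> nat" where
  "cond_idx (Mem i) = i" | "cond_idx (NotMem i) = i"

fun op_ok :: "nat \<Rightarrow> setop \<Rightarrow> bool" where
  "op_ok m NoOp = True" | "op_ok m (Ins j) = (j < m)"

definition safa_init_wf :: "('s, 'd) safa \<Rightarrow> bool" where
  "safa_init_wf M \<longleftrightarrow> finite (sQ M) \<and> sq0 M \<in> sQ M \<and> sF M \<subseteq> sQ M \<and>
     (\<forall>(q, a, c, op, q') \<in> sdelta M. q \<in> sQ M \<and> q' \<in> sQ M \<and> cond_idx c < sm M \<and> op_ok (sm M) op) \<and>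
     (\<forall>i < sm M. finite (sinit M i)) \<and> (\<forall>i \<ge> sm M. sinit M i = {})"

fun cond_holds :: "cond \<Rightarrow> (nat \<Rightarrow> 'd set) \<Rightarrow> 'd \<Rightarrow> bool" where
  "cond_holds (Mem i) S d = (d \<in> S i)"
| "cond_holds (NotMem i) S d = (d \<notin> S i)"

fun apply_op :: "setop \<Rightarrow> (nat \<Rightarrow> 'd set) \<Rightarrow> 'd \<Rightarrow> (nat \<Rightarrow> 'd set)" where
  "apply_op NoOp S d = S"
| "apply_op (Ins j) S d = S(j := insert d (S j))"

inductive safa_run :: "('s, 'd) safa \<Rightarrow> nat \<Rightarrow> (nat \<Rightarrow> 'd set) \<Rightarrow> ('s \<times> 'd) list
                        \<Rightarrow> nat \<Rightarrow> (nat \<Rightarrow> 'd set) \<Rightarrow> bool" for M where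
  safa_nil: "safa_run M q S [] q S"
| safa_cons: "\<lbrakk> (q, a, c, op, q') \<in> sdelta M; cond_holds c S d;
               safa_run M q' (apply_op op S d) w q'' S'' \<rbrakk>
              \<Longrightarrow> safa_run M q S ((a, d) # w) q'' S''"

definition safa_lang :: "('s, 'd) safa \<Rightarrow> ('s \<times> 'd) list set" where
  "safa_lang M = {w. \<exists>q S. safa_run M (sq0 M) (sinit M) w q S \<and> q \<in> sF M}"

definition L_SAFA_init :: "('s \<times> 'd) list set set" where
  "L_SAFA_init = {L. \<exists>M :: ('s, 'd) safa. safa_init_wf M \<and> safa_lang M = L}"

record ('s, 'd) kra =
  rk :: nat                                     \<comment> \<open>number of registers, named 1..k\<close>
  rQ :: "nat set"
  rdelta :: "(nat \<times> 's \<times> nat \<times> nat) set"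
  rtau0 :: "nat \<Rightarrow> 'd option"                   \<comment> \<open>None stands for \<bottom>\<close>
  rU :: "nat \<Rightarrow> 's \<Rightarrow> nat option"
  rq0 :: nat
  rF :: "nat set"

definition kra_wf :: "('s, 'd) kra \<Rightarrow> bool" where
  "kra_wf A \<longleftrightarrow> finite (rQ A) \<and> rq0 A \<in> rQ A \<and> rF A \<subseteq> rQ A \<and>
     (\<forall>(q, a, i, q') \<in> rdelta A. q \<in> rQ A \<and> q' \<in> rQ A \<and> i \<in> {1..rk A}) \<and>
     (\<forall>q a j. rU A q a = Some j \<longrightarrow> q \<in> rQ A \<and> j \<in> {1..rk A}) \<and>
     (\<forall>i. i \<notin> {1..rk A} \<longrightarrow> rtau0 A i = None) \<and>
     (\<forall>i \<in> {1..rk A}. \<forall>j \<in> {1..rk A}. rtau0 A i \<noteq> None \<and> rtau0 A i = rtau0 A j \<longrightarrow> i = j)"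

definition kra_step :: "('s, 'd) kra \<Rightarrow> nat \<Rightarrow> (nat \<Rightarrow> 'd option) \<Rightarrow> 's \<Rightarrow> 'd
                        \<Rightarrow> nat \<Rightarrow> (nat \<Rightarrow> 'd option) \<Rightarrow> bool" where
  "kra_step A q \<tau> a d q' \<tau>' \<longleftrightarrow>
     (\<exists>i \<in> {1..rk A}. \<tau> i = Some d \<and> (q, a, i, q') \<in> rdelta A \<and> \<tau>' = \<tau>)
   \<or> ((\<forall>i \<in> {1..rk A}. \<tau> i \<noteq> Some d) \<and>
      (\<exists>j. rU A q a = Some j \<and> \<tau>' = \<tau>(j := Some d) \<and> (q, a, j, q') \<in> rdelta A))"

inductive kra_run :: "('s, 'd) kra \<Rightarrow> nat \<Rightarrow> (nat \<Rightarrow> 'd option) \<Rightarrow> ('s \<times> 'd) list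
                       \<Rightarrow> nat \<Rightarrow> (nat \<Rightarrow> 'd option) \<Rightarrow> bool" for A where
  kra_nil: "kra_run A q \<tau> [] q \<tau>"
| kra_cons: "\<lbrakk> kra_step A q \<tau> a d q' \<tau>'; kra_run A q' \<tau>' w q'' \<tau>'' \<rbrakk>
             \<Longrightarrow> kra_run A q \<tau> ((a, d) # w) q'' \<tau>''"

definition kra_lang :: "('s, 'd) kra \<Rightarrow> ('s \<times> 'd) list set" where
  "kra_lang A = {w. \<exists>q \<tau>. kra_run A (rq0 A) (rtau0 A) w q \<tau> \<and> q \<in> rF A}"

definition L_KRFA :: "('s \<times> 'd) list set set" where
  "L_KRFA = {L. \<exists>A :: ('s, 'd) kra. rk A \<ge> 1 \<and> kra_wf A \<and> kra_lang A = L}"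

end

theory Submission
  imports Defs
begin

text \<open>The words whose data values are pairwise distinct are accepted by a SAFA with a single
  set h that tests !p(h) and inserts every value read. A k-register automaton accepting all of
  them has, after reading k + 1 distinct values that avoid its initial registers, forgotten one
  of them, say v; a further fresh value is then read by an update step, and the same step reads
  v, so a word repeating v is accepted as well.

  Conversely, the words (a1,d1)(a2,d1)(a3,d2)(a4,d2)... are accepted by a one-register
  automaton. Suppose a SAFA with m sets accepts exactly them, and look at the second letter of
  a pair d d. A value y that differs from d and from all later values and satisfies the
  condition tested there could replace d: the sets after the step then differ only on d and y,
  so the rest of the run is unaffected and a non-paired word is accepted. A fresh y excludes a
  test !p(h), and the values of earlier pairs exclude a test p(h) for a set h they meet; so
  every pair puts d into a set that no earlier pair met, which m + 1 pairs of fresh values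
  cannot do.\<close>

lemma inj_avoiding_finite:
  assumes "infinite (UNIV :: 'a set)" and "finite X"
  obtains f :: "nat \<Rightarrow> 'a" where "inj f" and "range f \<inter> X = {}"
proof -
  have "infinite (UNIV - X)"
    using assms by (simp add: Diff_infinite_finite)
  then obtain f :: "nat \<Rightarrow> 'a" where "inj f" "range f \<subseteq> UNIV - X"
    using infinite_countable_subset by blast
  then show ?thesis
    using that by blast
qed

section \<open>Runs of set augmented automata\<close>

inductive_simps safa_run_Nil [simp]: "safa_run M q S [] q' S'"
inductive_simps safa_run_Cons [simp]: "safa_run M q S ((a, d) # w) q' S'"

lemma safa_run_append:
  "safa_run M q S (u @ v) q'' S'' \<longleftrightarrow>
   (\<exists>q' S'. safa_run M q S u q' S' \<and> safa_run M q' S' v q'' S'')"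
  by (induction u arbitrary: q S) force+

lemma apply_op_mono: "S h \<subseteq> apply_op op S d h"
  by (cases op) auto

lemma apply_op_subset: "apply_op op S d h \<subseteq> insert d (S h)"
  by (cases op) auto

lemma safa_run_mono: "safa_run M q S w q' S' \<Longrightarrow> S h \<subseteq> S' h"
proof (induction rule: safa_run.induct)
  case (safa_cons q a c op q' S d w q'' S'')
  then show ?case
    using apply_op_mono[of S h op d] by blast
qed simp

lemma safa_run_subset: "safa_run M q S w q' S' \<Longrightarrow> S' h \<subseteq> S h \<union> snd ` set w"
proof (induction rule: safa_run.induct)
  case (safa_cons q a c op q' S d w q'' S'')
  then show ?case
    using apply_op_subset[of op S d h] by auto
qed simp

lemma safa_run_agreeing_sets:
  assumes "safa_run M q S w q' S'"
    and "\<forall>d \<in> snd ` set w. \<forall>h. d \<in> S h \<longleftrightarrow> d \<in> T h"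
  shows "\<exists>T'. safa_run M q T w q' T'"
  using assms
proof (induction arbitrary: T rule: safa_run.induct)
  case (safa_nil q S)
  then show ?case by simp
next
  case (safa_cons q a c op q' S d w q'' S'')
  have "\<forall>x \<in> snd ` set w. \<forall>h. x \<in> apply_op op S d h \<longleftrightarrow> x \<in> apply_op op T d h"
    using safa_cons.prems by (cases op) auto
  then obtain T' where "safa_run M q' (apply_op op T d) w q'' T'"
    using safa_cons.IH by blast
  moreover have "cond_holds c T d"
    using safa_cons.hyps(2) safa_cons.prems by (cases c) auto
  ultimately show ?case
    using safa_cons.hyps(1) by (auto intro: safa_run.safa_cons)
qed

section \<open>Runs of register automata\<close>

inductive_simps kra_run_Nil [simp]: "kra_run A q \<tau> [] q' \<tau>'"
inductive_simps kra_run_Cons [simp]: "kra_run A q \<tau> ((a, d) # w) q' \<tau>'"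

lemma kra_run_append:
  "kra_run A q \<tau> (u @ v) q'' \<tau>'' \<longleftrightarrow>
   (\<exists>q' \<tau>'. kra_run A q \<tau> u q' \<tau>' \<and> kra_run A q' \<tau>' v q'' \<tau>'')"
  by (induction u arbitrary: q \<tau>) force+

lemma kra_run_register_values:
  "kra_run A q \<tau> w q' \<tau>' \<Longrightarrow> \<tau>' i = Some x \<Longrightarrow> \<tau> i = Some x \<or> x \<in> snd ` set w"
  by (induction arbitrary: i rule: kra_run.induct)
     (fastforce simp: kra_step_def split: if_splits)+

lemma kra_step_unstored:
  assumes "\<forall>i \<in> {1..rk A}. \<tau> i \<noteq> Some d"
  shows "kra_step A q \<tau> a d q' \<tau>' \<longleftrightarrow>
    (\<exists>j. rU A q a = Some j \<and> \<tau>' = \<tau>(j := Some d) \<and> (q, a, j, q') \<in> rdelta A)"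
  using assms unfolding kra_step_def by blast

lemma kra_step_swap_unstored:
  assumes "kra_step A q \<tau> a d q' \<tau>'"
    and "\<forall>i \<in> {1..rk A}. \<tau> i \<noteq> Some d" and "\<forall>i \<in> {1..rk A}. \<tau> i \<noteq> Some e"
  shows "\<exists>\<tau>''. kra_step A q \<tau> a e q' \<tau>''"
proof -
  obtain j where "rU A q a = Some j" "(q, a, j, q') \<in> rdelta A"
    using assms(1) unfolding kra_step_unstored[OF assms(2)] by blast
  then have "kra_step A q \<tau> a e q' (\<tau>(j := Some e))"
    unfolding kra_step_unstored[OF assms(3)] by blast
  then show ?thesis
    by blast
qed

lemma exists_unstored:
  assumes "finite V" and "k < card V"
  shows "\<exists>v \<in> V. \<forall>i \<in> {1..k}. \<tau> i \<noteq> Some v"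
proof (rule ccontr)
  assume "\<not> ?thesis"
  then have "Some ` V \<subseteq> \<tau> ` {1..k}"
    by force
  then have "card (Some ` V) \<le> card (\<tau> ` {1..k})"
    by (simp add: card_mono)
  also have "\<dots> \<le> k"
    using card_image_le[of "{1..k}" \<tau>] by simp
  finally show False
    using assms(2) by (simp add: card_image)
qed

section \<open>Words with pairwise distinct data\<close>

definition distinct_data_safa :: "('s, 'd) safa" where
  "distinct_data_safa = \<lparr> sQ = {0}, sq0 = 0, sF = {0}, sm = 1,
     sdelta = {(0, a, NotMem 0, Ins 0, 0) | a. True}, sinit = (\<lambda>_. {}) \<rparr>"

lemma distinct_data_safa_wf: "safa_init_wf distinct_data_safa"
  by (auto simp: safa_init_wf_def distinct_data_safa_def)

lemma distinct_data_safa_run_Cons: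
  "safa_run distinct_data_safa 0 S ((a, d) # w) 0 S' \<longleftrightarrow>
   d \<notin> S 0 \<and> safa_run distinct_data_safa 0 (S(0 := insert d (S 0))) w 0 S'"
  by (auto simp: distinct_data_safa_def)

lemma distinct_data_safa_run:
  "(\<exists>S'. safa_run distinct_data_safa 0 S w 0 S') \<longleftrightarrow>
   distinct (map snd w) \<and> snd ` set w \<inter> S 0 = {}"
proof (induction w arbitrary: S)
  case (Cons x w)
  obtain a d where x: "x = (a, d)"
    by (cases x)
  have "(\<exists>S'. safa_run distinct_data_safa 0 S (x # w) 0 S') \<longleftrightarrow>
      d \<notin> S 0 \<and> (\<exists>S'. safa_run distinct_data_safa 0 (S(0 := insert d (S 0))) w 0 S')"
    unfolding x distinct_data_safa_run_Cons by blast
  also have "\<dots> \<longleftrightarrow> distinct (map snd (x # w)) \<and> snd ` set (x # w) \<inter> S 0 = {}"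
    unfolding Cons.IH x by auto
  finally show ?case .
qed (auto intro: safa_nil)

lemma safa_lang_distinct_data_safa:
  "safa_lang distinct_data_safa = {w. distinct (map snd w)}"
  using distinct_data_safa_run[of "\<lambda>_. {}"]
  by (auto simp: safa_lang_def distinct_data_safa_def)

lemma kra_lang_repeat_value:
  assumes accepted: "u @ [(a, e)] \<in> kra_lang A"
    and "e \<notin> snd ` set u" and "e \<notin> ran (rtau0 A)" and "rk A < card (snd ` set u)"
  shows "\<exists>v \<in> snd ` set u. u @ [(a, v)] \<in> kra_lang A"
proof -
  obtain q \<tau> qf \<tau>f where run_u: "kra_run A (rq0 A) (rtau0 A) u q \<tau>"
    and step: "kra_step A q \<tau> a e qf \<tau>f" and final: "qf \<in> rF A"
    using accepted unfolding kra_lang_def by (auto simp: kra_run_append)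
  have "x \<in> ran (rtau0 A) \<union> snd ` set u" if "\<tau> i = Some x" for i x
    using kra_run_register_values[OF run_u that] by (auto intro: ranI)
  then have "\<forall>i \<in> {1..rk A}. \<tau> i \<noteq> Some e"
    using assms(2,3) by blast
  moreover obtain v where v: "v \<in> snd ` set u" "\<forall>i \<in> {1..rk A}. \<tau> i \<noteq> Some v"
    using exists_unstored[OF finite_imageI[OF finite_set] assms(4)] by blast
  ultimately obtain \<tau>' where "kra_step A q \<tau> a v qf \<tau>'"
    using kra_step_swap_unstored[OF step] by blast
  then have "kra_run A q \<tau> [(a, v)] qf \<tau>'"
    by (rule kra_cons[OF _ kra_nil])
  then have "u @ [(a, v)] \<in> kra_lang A"
    using run_u final unfolding kra_lang_def mem_Collect_eq kra_run_append by blast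
  with v(1) show ?thesis
    by blast
qed

lemma distinct_data_not_in_L_KRFA:
  assumes "infinite (UNIV :: 'd set)"
  shows "{w :: ('s \<times> 'd) list. distinct (map snd w)} \<notin> L_KRFA"
proof
  fix a :: 's
  assume "{w :: ('s \<times> 'd) list. distinct (map snd w)} \<in> L_KRFA"
  then obtain A :: "('s, 'd) kra" where wf: "kra_wf A"
    and lang: "kra_lang A = {w. distinct (map snd w)}"
    unfolding L_KRFA_def by blast
  define k where "k = rk A"
  have "dom (rtau0 A) \<subseteq> {1..k}"
    using wf unfolding kra_wf_def k_def by (auto simp: dom_def)
  then have "finite (ran (rtau0 A))"
    by (meson finite_atLeastAtMost finite_ran finite_subset)
  then obtain g :: "nat \<Rightarrow> 'd" where g: "inj g" "range g \<inter> ran (rtau0 A) = {}"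
    using inj_avoiding_finite[OF assms] by blast
  define u where "u = map (\<lambda>i. (a, g i)) [0..<Suc k]"
  have data_u: "snd ` set u = g ` {0..<Suc k}"
    by (simp only: u_def set_map image_image set_upt snd_conv)
  have "map snd (u @ [(a, g (Suc k))]) = map g [0..<Suc (Suc k)]"
    by (simp add: u_def)
  then have "distinct (map snd (u @ [(a, g (Suc k))]))"
    by (metis distinct_map distinct_upt g(1) inj_on_subset subset_UNIV)
  then have "u @ [(a, g (Suc k))] \<in> kra_lang A"
    using lang by simp
  moreover have "g (Suc k) \<notin> snd ` set u"
    unfolding data_u by (auto simp: inj_eq[OF g(1)])
  moreover have "g (Suc k) \<notin> ran (rtau0 A)"
    using g(2) by blast
  moreover have "rk A < card (snd ` set u)"
    unfolding data_u k_def by (simp add: card_image inj_on_subset[OF g(1)])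
  ultimately have "\<exists>v \<in> snd ` set u. u @ [(a, v)] \<in> kra_lang A"
    by (rule kra_lang_repeat_value)
  then show False
    using lang by auto
qed

section \<open>Words made of pairs of equal data values\<close>

fun paired :: "('s \<times> 'd) list \<Rightarrow> bool" where
  "paired [] = True"
| "paired [_] = False"
| "paired (x # y # w) \<longleftrightarrow> snd x = snd y \<and> paired w"

lemma paired_append: "paired u \<Longrightarrow> paired (u @ v) = paired v"
  by (induction u rule: paired.induct) auto

definition paired_kra :: "('s, 'd) kra" where
  "paired_kra = \<lparr> rk = 1, rQ = {0, 1},
     rdelta = {(0, a, 1, 1) | a. True} \<union> {(1, a, 1, 0) | a. True},
     rtau0 = (\<lambda>_. None), rU = (\<lambda>q a. if q = 0 then Some 1 else None), rq0 = 0, rF = {0} \<rparr>"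

lemma paired_kra_wf: "kra_wf paired_kra" and rk_paired_kra: "rk paired_kra = 1"
  by (auto simp: kra_wf_def paired_kra_def)

lemma paired_kra_step_0:
  "kra_step paired_kra 0 \<tau> a d q' \<tau>' \<longleftrightarrow> q' = 1 \<and> \<tau>' = \<tau>(1 := Some d)"
  by (auto simp: kra_step_def paired_kra_def)

lemma paired_kra_step_1:
  "kra_step paired_kra 1 \<tau> a d q' \<tau>' \<longleftrightarrow> \<tau> 1 = Some d \<and> q' = 0 \<and> \<tau>' = \<tau>"
  by (auto simp: kra_step_def paired_kra_def)

lemma paired_kra_run: "(\<exists>\<tau>'. kra_run paired_kra 0 \<tau> w 0 \<tau>') \<longleftrightarrow> paired w"
proof (induction w arbitrary: \<tau> rule: paired.induct)
  case (3 x y w)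
  then show ?case
    by (cases x, cases y) (auto simp: paired_kra_step_0 paired_kra_step_1 simp del: One_nat_def)
qed (auto simp: paired_kra_step_0)

lemma kra_lang_paired_kra: "kra_lang paired_kra = {w. paired w}"
  using paired_kra_run[of "\<lambda>_. None"] by (auto simp: kra_lang_def paired_kra_def)

fun pair_word :: "'s \<Rightarrow> 'd list \<Rightarrow> ('s \<times> 'd) list" where
  "pair_word a [] = []"
| "pair_word a (d # ds) = (a, d) # (a, d) # pair_word a ds"

lemma paired_pair_word: "paired (pair_word a ds)"
  by (induction ds) auto

lemma pair_word_append: "pair_word a (ds @ es) = pair_word a ds @ pair_word a es"
  by (induction ds) auto

lemma data_pair_word: "snd ` set (pair_word a ds) = set ds"
  by (induction ds) auto

lemma paired_safa_second_letter:
  assumes lang: "safa_lang M \<subseteq> {w. paired w}"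
    and prefix: "safa_run M (sq0 M) (sinit M) (u @ [(a, d)]) q S" and "paired u"
    and trans: "(q, b, c, op, q') \<in> sdelta M"
    and suffix: "safa_run M q' (apply_op op S d) v qf Sf" and "qf \<in> sF M"
    and "y \<noteq> d" and "y \<notin> snd ` set v" and "d \<notin> snd ` set v"
  shows "\<not> cond_holds c S y"
proof
  assume "cond_holds c S y"
  have "\<forall>x \<in> snd ` set v. \<forall>h. x \<in> apply_op op S d h \<longleftrightarrow> x \<in> apply_op op S y h"
    using \<open>y \<notin> snd ` set v\<close> \<open>d \<notin> snd ` set v\<close> by (cases op) auto
  then obtain T where "safa_run M q' (apply_op op S y) v qf T"
    using safa_run_agreeing_sets[OF suffix] by blast
  then have "safa_run M q S ((b, y) # v) qf T"
    by (rule safa_cons[OF trans \<open>cond_holds c S y\<close>])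
  then have "safa_run M (sq0 M) (sinit M) ((u @ [(a, d)]) @ (b, y) # v) qf T"
    using prefix unfolding safa_run_append by blast
  then have "(u @ [(a, d)]) @ (b, y) # v \<in> safa_lang M"
    using \<open>qf \<in> sF M\<close> unfolding safa_lang_def by blast
  then have "paired (u @ (a, d) # (b, y) # v)"
    using lang by auto
  then have "paired ((a, d) # (b, y) # v)"
    using paired_append[OF \<open>paired u\<close>] by simp
  then show False
    using \<open>y \<noteq> d\<close> by simp
qed

lemma paired_safa_pair_step:
  assumes lang: "safa_lang M \<subseteq> {w. paired w}" and wf: "safa_init_wf M"
    and prefix: "safa_run M (sq0 M) (sinit M) u q S" and "paired u"
    and run: "safa_run M q S ((a, d) # (b, d) # v) qf Sf" and "qf \<in> sF M"
    and "d \<notin> snd ` set v"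
    and fresh: "y \<noteq> d" "y \<notin> snd ` set v" "\<forall>h. y \<notin> S h"
  obtains h q' S' where "h < sm M" "S h \<subseteq> insert d (snd ` set v)" "d \<in> S' h"
    and "safa_run M q S [(a, d), (b, d)] q' S'" and "safa_run M q' S' v qf Sf"
proof -
  from run obtain c1 op1 q1 c op q' where
    t1: "(q, a, c1, op1, q1) \<in> sdelta M" "cond_holds c1 S d"
    and t2: "(q1, b, c, op, q') \<in> sdelta M" "cond_holds c (apply_op op1 S d) d"
    and rest: "safa_run M q' (apply_op op (apply_op op1 S d) d) v qf Sf"
    by auto
  define S1 where "S1 = apply_op op1 S d"
  have "safa_run M (sq0 M) (sinit M) (u @ [(a, d)]) q1 S1"
    using prefix t1 unfolding safa_run_append S1_def by auto
  then have rigid: "\<not> cond_holds c S1 x" if "x \<noteq> d" "x \<notin> snd ` set v" for x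
    using paired_safa_second_letter[OF lang _ \<open>paired u\<close> t2(1)] rest \<open>qf \<in> sF M\<close>
      \<open>d \<notin> snd ` set v\<close> that unfolding S1_def by blast
  show ?thesis
  proof (cases c)
    case (NotMem h)
    have "y \<notin> S1 h"
      using apply_op_subset[of op1 S d h] fresh unfolding S1_def by blast
    then show ?thesis
      using rigid[OF fresh(1,2)] NotMem by simp
  next
    case (Mem h)
    have "h < sm M"
      using wf t2(1) Mem unfolding safa_init_wf_def by fastforce
    moreover have "S h \<subseteq> insert d (snd ` set v)"
      using rigid Mem apply_op_mono[of S h op1 d] unfolding S1_def by fastforce
    moreover have "d \<in> apply_op op S1 d h"
      using t2(2) Mem apply_op_mono[of S1 h op d] unfolding S1_def by auto
    moreover have "safa_run M q S [(a, d), (b, d)] q' (apply_op op S1 d)"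
      using safa_cons[OF t1 safa_cons[OF t2 safa_nil]] unfolding S1_def .
    ultimately show ?thesis
      using that rest unfolding S1_def by blast
  qed
qed

definition sets_meeting :: "nat \<Rightarrow> (nat \<Rightarrow> 'd set) \<Rightarrow> 'd set \<Rightarrow> nat set" where
  "sets_meeting m S V = {h. h < m \<and> S h \<inter> V \<noteq> {}}"

lemma finite_sets_meeting: "finite (sets_meeting m S V)"
  by (simp add: sets_meeting_def)

lemma card_sets_meeting_le: "card (sets_meeting m S V) \<le> m"
  using card_mono[of "{..<m}" "sets_meeting m S V"] by (auto simp: sets_meeting_def)

lemma paired_safa_meets_new_sets:
  fixes f :: "nat \<Rightarrow> 'd"
  assumes lang: "safa_lang M \<subseteq> {w. paired w}" and wf: "safa_init_wf M"
    and "inj f" and init: "\<forall>i h. f i \<notin> sinit M h"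
    and accepted: "pair_word a (map f [0..<n]) \<in> safa_lang M" and "j \<le> n"
  shows "\<exists>q S qf Sf. safa_run M (sq0 M) (sinit M) (pair_word a (map f [0..<j])) q S \<and>
    safa_run M q S (pair_word a (map f [j..<n])) qf Sf \<and> qf \<in> sF M \<and>
    j \<le> card (sets_meeting (sm M) S (f ` {..<j}))"
  using \<open>j \<le> n\<close>
proof (induction j)
  case 0
  then show ?case
    using accepted by (auto simp: safa_lang_def)
next
  case (Suc j)
  define v where "v = pair_word a (map f [Suc j..<n])"
  obtain q S qf Sf where prefix: "safa_run M (sq0 M) (sinit M) (pair_word a (map f [0..<j])) q S"
    and suffix: "safa_run M q S (pair_word a (map f [j..<n])) qf Sf" and "qf \<in> sF M"
    and IH: "j \<le> card (sets_meeting (sm M) S (f ` {..<j}))"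
    using Suc by auto
  have run: "safa_run M q S ((a, f j) # (a, f j) # v) qf Sf"
    using suffix Suc.prems by (simp add: v_def upt_conv_Cons del: safa_run_Cons)
  have pair_word_Suc:
    "pair_word a (map f [0..<Suc j]) = pair_word a (map f [0..<j]) @ [(a, f j), (a, f j)]"
    by (simp add: pair_word_append)
  have data_v: "snd ` set v = f ` {Suc j..<n}"
    by (simp add: v_def data_pair_word)
  have "S h \<subseteq> sinit M h \<union> f ` {..<j}" for h
    using safa_run_subset[OF prefix] by (simp add: data_pair_word atLeast0LessThan)
  moreover have "f n \<notin> f ` {..<j}"
    using Suc.prems by (auto simp: inj_eq[OF \<open>inj f\<close>])
  ultimately have unstored: "\<forall>h. f n \<notin> S h"
    using init by blast
  have later: "f j \<notin> snd ` set v" "f n \<noteq> f j" "f n \<notin> snd ` set v"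
    using Suc.prems by (auto simp: data_v inj_eq[OF \<open>inj f\<close>])
  obtain h q' S' where "h < sm M" and old: "S h \<subseteq> insert (f j) (snd ` set v)"
    and "f j \<in> S' h" and step: "safa_run M q S [(a, f j), (a, f j)] q' S'"
    and rest: "safa_run M q' S' v qf Sf"
    by (rule paired_safa_pair_step[OF lang wf prefix paired_pair_word run \<open>qf \<in> sF M\<close>
          later unstored])
  have "h \<notin> sets_meeting (sm M) S (f ` {..<j})"
    using old by (auto simp: sets_meeting_def data_v inj_eq[OF \<open>inj f\<close>])
  then have "Suc j \<le> card (insert h (sets_meeting (sm M) S (f ` {..<j})))"
    using IH by (simp add: finite_sets_meeting)
  also have "\<dots> \<le> card (sets_meeting (sm M) S' (f ` {..<Suc j}))"
  proof (rule card_mono[OF finite_sets_meeting])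
    show "insert h (sets_meeting (sm M) S (f ` {..<j})) \<subseteq>
        sets_meeting (sm M) S' (f ` {..<Suc j})"
      using \<open>h < sm M\<close> \<open>f j \<in> S' h\<close> safa_run_mono[OF step]
      unfolding sets_meeting_def lessThan_Suc image_insert by blast
  qed
  finally have "Suc j \<le> card (sets_meeting (sm M) S' (f ` {..<Suc j}))" .
  moreover have "safa_run M (sq0 M) (sinit M) (pair_word a (map f [0..<Suc j])) q' S'"
    using prefix step unfolding pair_word_Suc safa_run_append by blast
  ultimately show ?case
    using rest \<open>qf \<in> sF M\<close> unfolding v_def by blast
qed

lemma paired_not_in_L_SAFA_init:
  assumes "infinite (UNIV :: 'd set)"
  shows "{w :: ('s \<times> 'd) list. paired w} \<notin> L_SAFA_init"
proof
  fix a :: 's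
  assume "{w :: ('s \<times> 'd) list. paired w} \<in> L_SAFA_init"
  then obtain M :: "('s, 'd) safa" where wf: "safa_init_wf M" and lang: "safa_lang M = {w. paired w}"
    unfolding L_SAFA_init_def by blast
  have "finite (\<Union>h<sm M. sinit M h)"
    using wf by (auto simp: safa_init_wf_def)
  then obtain f :: "nat \<Rightarrow> 'd" where f: "inj f" "range f \<inter> (\<Union>h<sm M. sinit M h) = {}"
    using inj_avoiding_finite[OF assms] by blast
  have init: "\<forall>i h. f i \<notin> sinit M h"
  proof (intro allI)
    fix i h
    show "f i \<notin> sinit M h"
      using f(2) wf by (cases "h < sm M") (auto simp: safa_init_wf_def)
  qed
  have "safa_lang M \<subseteq> {w. paired w}"
    using lang by simp
  moreover have "pair_word a (map f [0..<Suc (sm M)]) \<in> safa_lang M"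
    using lang by (simp add: paired_pair_word)
  ultimately obtain S where "Suc (sm M) \<le> card (sets_meeting (sm M) S (f ` {..<Suc (sm M)}))"
    using paired_safa_meets_new_sets[OF _ wf f(1) init _ order_refl] by blast
  then show False
    using card_sets_meeting_le[of "sm M" S "f ` {..<Suc (sm M)}"] by linarith
qed

theorem theorem16:
  assumes "infinite (UNIV :: 'd set)" and "countable (UNIV :: 'd set)"
  shows "(\<exists>L :: ('s::finite \<times> 'd) list set. L \<in> L_SAFA_init \<and> L \<notin> L_KRFA) \<and>
         (\<exists>L :: ('s::finite \<times> 'd) list set. L \<in> L_KRFA \<and> L \<notin> L_SAFA_init)"
proof (intro conjI exI)
  show "{w :: ('s \<times> 'd) list. distinct (map snd w)} \<in> L_SAFA_init"
    unfolding L_SAFA_init_def mem_Collect_eq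
    by (rule exI[of _ distinct_data_safa]) (simp add: distinct_data_safa_wf safa_lang_distinct_data_safa)
  show "{w :: ('s \<times> 'd) list. distinct (map snd w)} \<notin> L_KRFA"
    using distinct_data_not_in_L_KRFA[OF assms(1)] .
  show "{w :: ('s \<times> 'd) list. paired w} \<in> L_KRFA"
    unfolding L_KRFA_def mem_Collect_eq
    by (rule exI[of _ paired_kra]) (simp add: paired_kra_wf rk_paired_kra kra_lang_paired_kra)
  show "{w :: ('s \<times> 'd) list. paired w} \<notin> L_SAFA_init"
    using paired_not_in_L_SAFA_init[OF assms(1)] .
qed

end
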